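(* Let $G=(V,E)$ be a chordal graph on a non-empty finite vertex set $V$, and let $\{A_v\}_{v\in V}$ be events in a probability space with $\bigcup_{v\in V}A_v\neq\emptyset$. For non-empty $J\subseteq V$ put $B_J:=\bigcap_{i\in J}A_i\cap\bigcap_{i\in V\setminus J}\overline{A_i}$, and let \[ \alpha'(G):=\max\{\,c(G[J]) : J\subseteq V,\ J\neq\emptyset,\ B_J\neq\emptyset\,\}. \] Then for every integer $r\ge1$, \[ \Pr\Big(\bigcup_{v\in V} A_v\Big) \ge \frac{1}{\alpha'(G)} \sum_{\substack{I\in\mathscr{C}(G)\\ |I|\le 2r}} (-1)^{|I|-1}\Pr\Big(\bigcap_{i\in I} A_i\Big) \quad\text{and}\quad \Pr\Big(\bigcup_{v\in V} A_v\Big) \ge \frac{1}{\alpha'(G)} \sum_{I\in\mathscr{C}(G)} (-1)^{|I|-1}\Pr\Big(\bigcap_{i\in I} A_i\Big). \] In particular, if $G[J]$ is connected for every non-empty $J\subseteq V$ with $B_J\neq\emptyset$, then $\Pr\big(\bigcup_{v\in V}A_v\big)=\sum_{I\in\mathscr{C}(G)}(-1)^{|I|-1}\Pr\big(\bigcap_{i\in I}A_i\big)$.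
   Context: A graph is chordal if it contains no cycle of length four or more as an induced subgraph. $\mathscr{C}(G)$ denotes the clique complex of $G$: the set of all non-empty subsets $I\subseteq V$ whose elements are pairwise adjacent in $G$. $G[J]$ is the subgraph induced on $J$, $c(\cdot)$ is the number of connected components, and $\overline{A}$ is the complement of the event $A$. *)

theory Defs
  imports "HOL-Probability.Probability"
begin

definition simple_graph :: "'a set \<Rightarrow> ('a \<Rightarrow> 'a \<Rightarrow> bool) \<Rightarrow> bool" where
  "simple_graph V E \<longleftrightarrow> finite V \<and> (\<forall>x y. E x y \<longrightarrow> x \<in> V \<and> y \<in> V)
     \<and> (\<forall>x y. E x y \<longrightarrow> E y x) \<and> (\<forall>x. \<not> E x x)"

definition induced_cycle :: "'a set \<Rightarrow> ('a \<Rightarrow> 'a \<Rightarrow> bool) \<Rightarrow> 'a list \<Rightarrow> bool" where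
  "induced_cycle V E xs \<longleftrightarrow> length xs \<ge> 3 \<and> distinct xs \<and> set xs \<subseteq> V \<and>
     (\<forall>i < length xs. \<forall>j < length xs.
        E (xs ! i) (xs ! j) \<longleftrightarrow> (j = Suc i mod length xs \<or> i = Suc j mod length xs))"

definition chordal :: "'a set \<Rightarrow> ('a \<Rightarrow> 'a \<Rightarrow> bool) \<Rightarrow> bool" where
  "chordal V E \<longleftrightarrow> \<not> (\<exists>xs. induced_cycle V E xs \<and> length xs \<ge> 4)"

definition conn_rel :: "('a \<Rightarrow> 'a \<Rightarrow> bool) \<Rightarrow> 'a set \<Rightarrow> ('a \<times> 'a) set" where
  "conn_rel E J = {(x, y). x \<in> J \<and> y \<in> J \<and> (\<lambda>u v. u \<in> J \<and> v \<in> J \<and> E u v)\<^sup>*\<^sup>* x y}"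

definition num_components :: "('a \<Rightarrow> 'a \<Rightarrow> bool) \<Rightarrow> 'a set \<Rightarrow> nat" where
  "num_components E J = card (J // conn_rel E J)"

definition clique_complex :: "'a set \<Rightarrow> ('a \<Rightarrow> 'a \<Rightarrow> bool) \<Rightarrow> 'a set set" where
  "clique_complex V E = {I. I \<noteq> {} \<and> I \<subseteq> V \<and> (\<forall>x\<in>I. \<forall>y\<in>I. x \<noteq> y \<longrightarrow> E x y)}"

definition atom :: "'b measure \<Rightarrow> 'a set \<Rightarrow> ('a \<Rightarrow> 'b set) \<Rightarrow> 'a set \<Rightarrow> 'b set" where
  "atom M V A J = space M \<inter> (\<Inter>i\<in>J. A i) \<inter> (\<Inter>i\<in>V - J. space M - A i)"

definition alpha' :: "'b measure \<Rightarrow> 'a set \<Rightarrow> ('a \<Rightarrow> 'a \<Rightarrow> bool) \<Rightarrow> ('a \<Rightarrow> 'b set) \<Rightarrow> nat" where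
  "alpha' M V E A = Max {num_components E J | J. J \<subseteq> V \<and> J \<noteq> {} \<and> atom M V A J \<noteq> {}}"

end

theory Submission
  imports Defs
begin

text \<open>
  For an outcome w let J(w) be the set of indices of the events that occur at w.
  The alternating sum over cliques of size at most m of the indicators of the clique
  intersections equals, pointwise, the truncated alternating clique count of G[J(w)].
  For a chordal graph this count satisfies Bonferroni-type inequalities with respect
  to the number of components c(G[J]): it is at most c(G[J]) for even m, at least
  c(G[J]) for odd m, and equal to c(G[J]) once m \<ge> |J|.  Both quantities obey the
  same recursion on deleting a vertex v (the cliques through v are v plus a clique
  of its neighbourhood N, and c(H) + c(N) = c(H - v) + 1); the component recursion
  rests on the separation property of chordal graphs that neighbours of v connected
  in H - v are connected inside N.  Taking expectations and bounding c(G[J(w)]) by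
  \<alpha>' on the union (and by 0 outside it) yields the theorem.
\<close>

lemma simple_graph_sym: "simple_graph V E \<Longrightarrow> E x y \<Longrightarrow> E y x"
  by (simp add: simple_graph_def)

lemma simple_graph_irrefl: "simple_graph V E \<Longrightarrow> \<not> E x x"
  by (simp add: simple_graph_def)

lemma simple_graph_finite: "simple_graph V E \<Longrightarrow> finite V"
  by (simp add: simple_graph_def)

definition walk :: "('a \<Rightarrow> 'a \<Rightarrow> bool) \<Rightarrow> 'a set \<Rightarrow> 'a list \<Rightarrow> bool" where
  "walk E H xs \<longleftrightarrow> xs \<noteq> [] \<and> set xs \<subseteq> H \<and> successively E xs"

lemma walk_snoc: "walk E H xs \<Longrightarrow> z \<in> H \<Longrightarrow> E (last xs) z \<Longrightarrow> walk E H (xs @ [z])"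
  by (auto simp: walk_def successively_append_iff)

lemma walk_nth: "walk E H xs \<Longrightarrow> Suc i < length xs \<Longrightarrow> E (xs ! i) (xs ! Suc i)"
  by (auto simp: walk_def successively_nth)

lemma walk_take: "walk E H xs \<Longrightarrow> 0 < n \<Longrightarrow> walk E H (take n xs)"
  unfolding walk_def
  by (metis append_take_drop_id successively_append_iff set_take_subset order_trans take_eq_Nil gr_implies_not0)

lemma walk_drop: "walk E H xs \<Longrightarrow> n < length xs \<Longrightarrow> walk E H (drop n xs)"
  unfolding walk_def
  by (metis append_take_drop_id successively_append_iff set_drop_subset order_trans drop_eq_Nil not_le)

lemma walk_splice:
  assumes "walk E H xs" "0 < i" "i \<le> j" "j < length xs" "E (xs ! (i - 1)) (xs ! j)"
  shows "walk E H (take i xs @ drop j xs)"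
proof -
  have "take i xs = take (i - 1) xs @ [xs ! (i - 1)]"
    using take_Suc_conv_app_nth[of "i - 1" xs] assms by simp
  then have "last (take i xs) = xs ! (i - 1)" by simp
  moreover have "hd (drop j xs) = xs ! j"
    using assms by (simp add: hd_drop_conv_nth)
  ultimately show ?thesis
    using assms walk_take[OF assms(1), of i] walk_drop[OF assms(1), of j]
    by (auto simp: walk_def successively_append_iff)
qed

lemma conn_rel_refl: "x \<in> J \<Longrightarrow> (x, x) \<in> conn_rel E J"
  by (simp add: conn_rel_def)

lemma conn_rel_edge: "x \<in> J \<Longrightarrow> y \<in> J \<Longrightarrow> E x y \<Longrightarrow> (x, y) \<in> conn_rel E J"
  by (auto simp: conn_rel_def)

lemma conn_rel_trans: "(x, y) \<in> conn_rel E J \<Longrightarrow> (y, z) \<in> conn_rel E J \<Longrightarrow> (x, z) \<in> conn_rel E J"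
  by (auto simp: conn_rel_def)

lemma conn_rel_mono: "J \<subseteq> K \<Longrightarrow> conn_rel E J \<subseteq> conn_rel E K"
  unfolding conn_rel_def by (auto elim!: rtranclp_mono[THEN predicate2D, rotated])

lemma conn_rel_equiv:
  assumes "\<And>x y. E x y \<Longrightarrow> E y x"
  shows "equiv J (conn_rel E J)"
proof (rule equivI)
  have "symp (\<lambda>u v. u \<in> J \<and> v \<in> J \<and> E u v)"
    using assms by (auto intro: sympI)
  then show "sym (conn_rel E J)"
    unfolding conn_rel_def by (auto intro!: symI dest: sympD[OF symp_rtranclp])
  show "refl_on J (conn_rel E J)"
    by (auto simp: refl_on_def conn_rel_def)
  show "trans (conn_rel E J)"
    by (auto intro: transI conn_rel_trans)
  show "conn_rel E J \<subseteq> J \<times> J"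
    by (auto simp: conn_rel_def)
qed

lemma conn_rel_imp_walk:
  assumes "(x, y) \<in> conn_rel E J"
  obtains xs where "walk E J xs" "hd xs = x" "last xs = y"
proof -
  have "(\<lambda>u v. u \<in> J \<and> v \<in> J \<and> E u v)\<^sup>*\<^sup>* x y" and "x \<in> J"
    using assms by (auto simp: conn_rel_def)
  then have "\<exists>xs. walk E J xs \<and> hd xs = x \<and> last xs = y"
  proof (induction rule: rtranclp_induct)
    case base
    then show ?case by (intro exI[of _ "[x]"]) (simp add: walk_def)
  next
    case (step y z)
    then obtain xs where xs: "walk E J xs" "hd xs = x" "last xs = y" by auto
    then have "walk E J (xs @ [z])"
      using step by (intro walk_snoc) auto
    with xs show ?case
      by (intro exI[of _ "xs @ [z]"]) (simp add: walk_def)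
  qed
  then show ?thesis using that by blast
qed

lemma shortest_walk_induced:
  assumes walk: "walk E H xs"
    and shortest: "\<And>ys. walk E H ys \<Longrightarrow> hd ys = hd xs \<Longrightarrow> last ys = last xs \<Longrightarrow> length xs \<le> length ys"
  shows "distinct xs" and "\<And>i j. i < j \<Longrightarrow> j < length xs \<Longrightarrow> j \<noteq> Suc i \<Longrightarrow> \<not> E (xs ! i) (xs ! j)"
proof -
  have ne: "xs \<noteq> []" using walk by (simp add: walk_def)
  have no_shortcut: "length xs \<le> i + (length xs - j)"
    if "0 < i" "i \<le> j" "j < length xs" "E (xs ! (i - 1)) (xs ! j)" for i j
  proof -
    have "hd (take i xs @ drop j xs) = hd xs" "last (take i xs @ drop j xs) = last xs"
      using that ne by auto
    then show ?thesis
      using shortest[OF walk_splice[OF walk that]] that by simp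
  qed
  show "\<not> E (xs ! i) (xs ! j)" if "i < j" "j < length xs" "j \<noteq> Suc i" for i j
    using no_shortcut[of "Suc i" j] that by auto
  show "distinct xs"
  proof (rule ccontr)
    assume "\<not> distinct xs"
    then obtain i j where ij: "i < j" "j < length xs" "xs ! i = xs ! j"
      by (metis distinct_conv_nth linorder_neqE_nat)
    show False
    proof (cases "i = 0")
      case True
      have "hd (drop j xs) = hd xs" "last (drop j xs) = last xs"
        using ij True ne by (simp_all add: hd_drop_conv_nth hd_conv_nth)
      then show False
        using shortest[OF walk_drop[OF walk ij(2)]] ij by simp
    next
      case False
      then show False
        using no_shortcut[of i j] walk_nth[OF walk, of "i - 1"] ij by simp
    qed
  qed
qed

lemma induced_cycle_close_path:
  assumes sym: "\<And>x y. E x y \<Longrightarrow> E y x" and irr: "\<And>x. \<not> E x x"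
    and walk: "walk E V xs" and dist: "distinct xs"
    and chordless: "\<And>i j. i < j \<Longrightarrow> j < length xs \<Longrightarrow> j \<noteq> Suc i \<Longrightarrow> \<not> E (xs ! i) (xs ! j)"
    and len: "3 \<le> length xs" and v: "v \<in> V" "v \<notin> set xs"
    and ends: "\<And>j. j < length xs \<Longrightarrow> E v (xs ! j) \<longleftrightarrow> j = 0 \<or> j = length xs - 1"
  shows "induced_cycle V E (v # xs)"
proof -
  define n where "n = length xs"
  have path_adj: "E (xs ! i) (xs ! j) \<longleftrightarrow> j = Suc i \<or> i = Suc j" if "i < n" "j < n" for i j
  proof
    assume e: "E (xs ! i) (xs ! j)"
    have "i \<noteq> j" using e irr by auto
    then show "j = Suc i \<or> i = Suc j"
      using chordless[of i j] chordless[of j i] sym[OF e] e that n_def by (cases "i < j") auto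
  next
    assume "j = Suc i \<or> i = Suc j"
    then show "E (xs ! i) (xs ! j)"
      using walk_nth[OF walk, of i] walk_nth[OF walk, of j] sym that n_def by auto
  qed
  have succ_mod: "Suc k mod Suc n = (if k = n then 0 else Suc k)" if "k < Suc n" for k
    using that by auto
  have ends_n: "E v (xs ! j) \<longleftrightarrow> j = 0 \<or> j = n - 1" if "j < n" for j
    using ends that n_def by simp
  have n3: "3 \<le> n" using len n_def by simp
  have cyc_adj: "E ((v # xs) ! i) ((v # xs) ! j) \<longleftrightarrow> j = Suc i mod (Suc n) \<or> i = Suc j mod (Suc n)"
    if "i < Suc n" "j < Suc n" for i j
  proof (cases i)
    case 0
    show ?thesis
    proof (cases j)
      case (Suc j')
      then show ?thesis
        using 0 ends_n[of j'] succ_mod[of "Suc j'"] that n3 by auto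
    qed (use 0 irr n3 in simp)
  next
    case (Suc i')
    show ?thesis
    proof (cases j)
      case 0
      then show ?thesis
        using Suc ends_n[of i'] succ_mod[of "Suc i'"] sym[of v] sym[of _ v] that n3 by auto
    next
      case (Suc j')
      then show ?thesis
        using \<open>i = Suc i'\<close> path_adj[of i' j'] succ_mod[of "Suc i'"] succ_mod[of "Suc j'"] that by auto
    qed
  qed
  show ?thesis
    unfolding induced_cycle_def
    using len dist v walk cyc_adj n_def by (auto simp: walk_def)
qed

definition nbhd :: "('a \<Rightarrow> 'a \<Rightarrow> bool) \<Rightarrow> 'a set \<Rightarrow> 'a \<Rightarrow> 'a set" where
  "nbhd E H v = {u \<in> H. E v u}"

text \<open>Otherwise a shortest walk between such neighbours that leaves
  the neighbourhood closes, together with v, an induced cycle of length at least 4.\<close>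
lemma chordal_nbhd_connected:
  assumes sg: "simple_graph V E" and ch: "chordal V E" and HV: "H \<subseteq> V" and v: "v \<in> H"
    and ab: "a \<in> nbhd E H v" "b \<in> nbhd E H v"
    and conn: "(a, b) \<in> conn_rel E (H - {v})"
  shows "(a, b) \<in> conn_rel E (nbhd E H v)"
proof (rule ccontr)
  assume not_conn: "(a, b) \<notin> conn_rel E (nbhd E H v)"
  define N where "N = nbhd E H v"
  define H' where "H' = H - {v}"
  define bad where "bad xs \<longleftrightarrow> walk E H' xs \<and> hd xs \<in> N \<and> last xs \<in> N \<and> (hd xs, last xs) \<notin> conn_rel E N"
    for xs
  have sym: "\<And>x y. E x y \<Longrightarrow> E y x" and irr: "\<And>x. \<not> E x x"
    using simple_graph_sym[OF sg] simple_graph_irrefl[OF sg] by blast+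
  obtain xs0 where "walk E H' xs0" "hd xs0 = a" "last xs0 = b"
    using conn unfolding H'_def by (rule conn_rel_imp_walk)
  then have "bad xs0" using ab not_conn unfolding bad_def N_def by auto
  then obtain xs where "bad xs" and minimal: "\<And>ys. bad ys \<Longrightarrow> length xs \<le> length ys"
    using ex_has_least_nat[of bad xs0 length] by blast
  then have walk: "walk E H' xs" and hd_N: "hd xs \<in> N" and last_N: "last xs \<in> N"
    and ends_not_conn: "(hd xs, last xs) \<notin> conn_rel E N"
    unfolding bad_def by auto
  define n where "n = length xs"
  have ne: "xs \<noteq> []" using walk by (simp add: walk_def)
  have hd_nth: "hd xs = xs ! 0" and last_nth: "last xs = xs ! (n - 1)"
    using ne by (simp_all add: hd_conv_nth last_conv_nth n_def)
  have shortest: "length xs \<le> length ys" if "walk E H' ys" "hd ys = hd xs" "last ys = last xs" for ys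
    using minimal[of ys] that hd_N last_N ends_not_conn unfolding bad_def by simp
  have dist: "distinct xs"
    by (rule shortest_walk_induced(1)[OF walk]) (fact shortest)
  have chordless: "\<not> E (xs ! i) (xs ! j)" if "i < j" "j < length xs" "j \<noteq> Suc i" for i j
    by (rule shortest_walk_induced(2)[OF walk _ that]) (fact shortest)
  have ends_distinct: "hd xs \<noteq> last xs" and ends_nonadj: "\<not> E (hd xs) (last xs)"
    using ends_not_conn conn_rel_refl[of "hd xs" N E] conn_rel_edge[of "hd xs" N "last xs" E]
      hd_N last_N by auto
  have "n \<noteq> 1" using ends_distinct hd_nth last_nth by auto
  moreover have "n \<noteq> 2"
    using ends_nonadj walk_nth[OF walk, of 0] hd_nth last_nth n_def by auto
  ultimately have n3: "3 \<le> n"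
    using ne n_def by (cases n) auto
  \<comment> \<open>by minimality, no interior vertex lies in the neighbourhood\<close>
  have interior: "xs ! i \<notin> N" if "0 < i" "i < n - 1" for i
  proof
    assume i_N: "xs ! i \<in> N"
    then consider "(hd xs, xs ! i) \<notin> conn_rel E N" | "(xs ! i, last xs) \<notin> conn_rel E N"
      using ends_not_conn conn_rel_trans[of "hd xs" "xs ! i" E N "last xs"] by blast
    then show False
    proof cases
      case 1
      have "hd (take (Suc i) xs) = hd xs" "last (take (Suc i) xs) = xs ! i"
        using ne that n_def by (simp_all add: hd_take take_Suc_conv_app_nth)
      then have "bad (take (Suc i) xs)"
        using walk_take[OF walk, of "Suc i"] 1 hd_N i_N by (simp add: bad_def)
      then show False using minimal that n_def by fastforce
    next
      case 2
      have "bad (drop i xs)"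
        using walk_drop[OF walk, of i] 2 last_N i_N that n_def
        by (simp add: bad_def hd_drop_conv_nth)
      then show False using minimal that n_def by fastforce
    qed
  qed
  have ends: "E v (xs ! j) \<longleftrightarrow> j = 0 \<or> j = length xs - 1" if "j < length xs" for j
  proof -
    have "xs ! j \<in> H'" using walk that by (auto simp: walk_def)
    then have "E v (xs ! j) \<longleftrightarrow> xs ! j \<in> N" unfolding N_def H'_def nbhd_def by auto
    then show ?thesis using interior[of j] hd_N last_N hd_nth last_nth that n_def by force
  qed
  have walk_V: "walk E V xs" and v_V: "v \<in> V" and v_notin: "v \<notin> set xs"
    using walk HV v unfolding walk_def H'_def by auto
  have len3: "3 \<le> length xs" using n3 n_def by simp
  have "induced_cycle V E (v # xs)"
    by (rule induced_cycle_close_path) (fact sym irr walk_V dist chordless len3 v_V v_notin ends)+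
  moreover have "4 \<le> length (v # xs)" using n3 n_def by simp
  ultimately show False
    using ch unfolding chordal_def by blast
qed

lemma conn_rel_delete_vertex:
  assumes sym: "\<And>x y. E x y \<Longrightarrow> E y x"
    and xy: "(x, y) \<in> conn_rel E H" and xv: "x \<noteq> v"
  shows "(y \<noteq> v \<and> (x, y) \<in> conn_rel E (H - {v})) \<or> (\<exists>a\<in>nbhd E H v. (x, a) \<in> conn_rel E (H - {v}))"
proof -
  have "(\<lambda>u w. u \<in> H \<and> w \<in> H \<and> E u w)\<^sup>*\<^sup>* x y" and xH: "x \<in> H"
    using xy unfolding conn_rel_def by auto
  then show ?thesis
  proof (induction rule: rtranclp_induct)
    case base
    then show ?case using xv conn_rel_refl[of x "H - {v}" E] by auto
  next
    case (step y z)
    then consider "y \<noteq> v" "(x, y) \<in> conn_rel E (H - {v})"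
      | "\<exists>a\<in>nbhd E H v. (x, a) \<in> conn_rel E (H - {v})"
      by blast
    then show ?case
    proof cases
      case 1
      show ?thesis
      proof (cases "z = v")
        case True
        then have "y \<in> nbhd E H v" using step.hyps(2) sym by (auto simp: nbhd_def)
        then show ?thesis using 1 by blast
      next
        case False
        then have "(y, z) \<in> conn_rel E (H - {v})"
          using step.hyps(2) 1 by (auto intro: conn_rel_edge)
        then have "(x, z) \<in> conn_rel E (H - {v})" using 1(2) by (rule conn_rel_trans[rotated])
        then show ?thesis using False by blast
      qed
    next
      case 2
      then show ?thesis by blast
    qed
  qed
qed

lemma conn_to_deleted_vertex:
  assumes sym: "\<And>x y. E x y \<Longrightarrow> E y x" and x: "x \<in> H - {v}" and v: "v \<in> H"
  shows "(x, v) \<in> conn_rel E H \<longleftrightarrow> conn_rel E (H - {v}) `` {x} \<inter> nbhd E H v \<noteq> {}"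
proof
  assume "(x, v) \<in> conn_rel E H"
  from conn_rel_delete_vertex[of E x v H v, OF sym this] x
  show "conn_rel E (H - {v}) `` {x} \<inter> nbhd E H v \<noteq> {}" by auto
next
  assume "conn_rel E (H - {v}) `` {x} \<inter> nbhd E H v \<noteq> {}"
  then obtain a where "(x, a) \<in> conn_rel E (H - {v})" "a \<in> nbhd E H v" by auto
  then have "(x, a) \<in> conn_rel E H" "(a, v) \<in> conn_rel E H"
    using conn_rel_mono[of "H - {v}" H E] v sym by (auto simp: nbhd_def intro: conn_rel_edge)
  then show "(x, v) \<in> conn_rel E H" by (rule conn_rel_trans)
qed

lemma class_delete_vertex:
  assumes sym: "\<And>x y. E x y \<Longrightarrow> E y x" and x: "x \<in> H - {v}" and v: "v \<in> H"
    and not_conn: "(x, v) \<notin> conn_rel E H"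
  shows "conn_rel E H `` {x} = conn_rel E (H - {v}) `` {x}"
proof (intro equalityI subsetI)
  fix y assume "y \<in> conn_rel E H `` {x}"
  then have xy: "(x, y) \<in> conn_rel E H" by simp
  have "\<not> (\<exists>a\<in>nbhd E H v. (x, a) \<in> conn_rel E (H - {v}))"
    using conn_to_deleted_vertex[of E, OF sym x v] not_conn by auto
  with conn_rel_delete_vertex[of E x y H v, OF sym xy] x
  show "y \<in> conn_rel E (H - {v}) `` {x}" by auto
qed (use conn_rel_mono[of "H - {v}" H E] in auto)

lemma quotient_delete_vertex:
  assumes sym: "\<And>x y. E x y \<Longrightarrow> E y x" and v: "v \<in> H"
  shows "H // conn_rel E H = insert (conn_rel E H `` {v})
           {C \<in> (H - {v}) // conn_rel E (H - {v}). C \<inter> nbhd E H v = {}}"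
    (is "_ = insert _ ?Q0")
proof (intro equalityI subsetI)
  fix D assume "D \<in> H // conn_rel E H"
  then obtain x where x: "x \<in> H" and D: "D = conn_rel E H `` {x}"
    by (auto elim: quotientE)
  show "D \<in> insert (conn_rel E H `` {v}) ?Q0"
  proof (cases "(x, v) \<in> conn_rel E H")
    case True
    then show ?thesis
      using D equiv_class_eq[OF conn_rel_equiv[of E, OF sym]] by simp
  next
    case False
    then have x': "x \<in> H - {v}" using x conn_rel_refl[of x H E] by auto
    then have "D = conn_rel E (H - {v}) `` {x}"
      using D class_delete_vertex[of E, OF sym x' v False] by simp
    moreover have "conn_rel E (H - {v}) `` {x} \<inter> nbhd E H v = {}"
      using False conn_to_deleted_vertex[of E, OF sym x' v] by simp
    ultimately show ?thesis using x' by (auto intro: quotientI)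
  qed
next
  fix D assume D: "D \<in> insert (conn_rel E H `` {v}) ?Q0"
  show "D \<in> H // conn_rel E H"
  proof (cases "D = conn_rel E H `` {v}")
    case True
    then show ?thesis using v by (auto intro: quotientI)
  next
    case False
    then obtain x where x: "x \<in> H - {v}" and D_eq: "D = conn_rel E (H - {v}) `` {x}"
      and disj: "D \<inter> nbhd E H v = {}"
      using D by (auto elim: quotientE)
    then have "(x, v) \<notin> conn_rel E H"
      using conn_to_deleted_vertex[of E, OF sym x v] by simp
    then have "D = conn_rel E H `` {x}"
      using D_eq class_delete_vertex[of E, OF sym x v] by simp
    then show ?thesis using x by (auto intro: quotientI)
  qed
qed

lemma components_meeting_nbhd:
  assumes sg: "simple_graph V E" and ch: "chordal V E" and HV: "H \<subseteq> V" and v: "v \<in> H"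
  shows "bij_betw (\<lambda>D. conn_rel E (H - {v}) `` D) (nbhd E H v // conn_rel E (nbhd E H v))
           {C \<in> (H - {v}) // conn_rel E (H - {v}). C \<inter> nbhd E H v \<noteq> {}}"
proof -
  define N where "N = nbhd E H v"
  define R' where "R' = conn_rel E (H - {v})"
  define RN where "RN = conn_rel E N"
  have sym: "\<And>x y. E x y \<Longrightarrow> E y x" using simple_graph_sym[OF sg] by blast
  have N_sub: "N \<subseteq> H - {v}"
    using simple_graph_irrefl[OF sg] unfolding N_def nbhd_def by auto
  have eqR': "equiv (H - {v}) R'" and eqRN: "equiv N RN"
    unfolding R'_def RN_def by (auto intro: conn_rel_equiv[of E, OF sym])
  have RN_sub: "RN \<subseteq> R'" unfolding R'_def RN_def by (rule conn_rel_mono[OF N_sub])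
  have image_class: "R' `` (RN `` {a}) = R' `` {a}" if "a \<in> N" for a
  proof (intro equalityI subsetI)
    fix y assume "y \<in> R' `` (RN `` {a})"
    then obtain d where "(a, d) \<in> R'" "(d, y) \<in> R'" using RN_sub by auto
    then show "y \<in> R' `` {a}" unfolding R'_def by (auto intro: conn_rel_trans)
  next
    fix y assume "y \<in> R' `` {a}"
    moreover have "(a, a) \<in> RN" using that unfolding RN_def by (rule conn_rel_refl)
    ultimately show "y \<in> R' `` (RN `` {a})" by auto
  qed
  have "inj_on (\<lambda>D. R' `` D) (N // RN)"
  proof (rule inj_onI)
    fix D1 D2 assume "D1 \<in> N // RN" "D2 \<in> N // RN" and eq: "R' `` D1 = R' `` D2"
    then obtain a b where ab: "a \<in> N" "b \<in> N" "D1 = RN `` {a}" "D2 = RN `` {b}"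
      by (auto elim!: quotientE)
    then have "R' `` {a} = R' `` {b}" using eq image_class by simp
    moreover have "b \<in> R' `` {b}"
      using ab N_sub unfolding R'_def by (auto intro: conn_rel_refl)
    ultimately have "(a, b) \<in> R'" by auto
    then have "(a, b) \<in> RN"
      using chordal_nbhd_connected[OF sg ch HV v] ab unfolding R'_def RN_def N_def by blast
    then show "D1 = D2" using ab equiv_class_eq[OF eqRN] by simp
  qed
  moreover have "(\<lambda>D. R' `` D) ` (N // RN) = {C \<in> (H - {v}) // R'. C \<inter> N \<noteq> {}}"
  proof (intro equalityI subsetI)
    fix C assume "C \<in> (\<lambda>D. R' `` D) ` (N // RN)"
    then obtain a where a: "a \<in> N" "C = R' `` {a}" using image_class by (auto elim!: quotientE)
    moreover have "a \<in> C" using a N_sub unfolding R'_def by (auto intro: conn_rel_refl)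
    ultimately show "C \<in> {C \<in> (H - {v}) // R'. C \<inter> N \<noteq> {}}"
      using N_sub by (auto intro: quotientI)
  next
    fix C assume "C \<in> {C \<in> (H - {v}) // R'. C \<inter> N \<noteq> {}}"
    then obtain x a where x: "x \<in> H - {v}" "C = R' `` {x}" and a: "a \<in> C" "a \<in> N"
      by (auto elim!: quotientE)
    then have "C = R' `` {a}" using equiv_class_eq[OF eqR'] by simp
    then have "C = R' `` (RN `` {a})" using image_class a by simp
    then show "C \<in> (\<lambda>D. R' `` D) ` (N // RN)" using a by (auto intro: quotientI)
  qed
  ultimately show ?thesis
    unfolding bij_betw_def N_def R'_def RN_def by simp
qed

lemma num_components_delete_vertex:
  assumes sg: "simple_graph V E" and ch: "chordal V E" and HV: "H \<subseteq> V" and v: "v \<in> H"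
  shows "num_components E H + num_components E (nbhd E H v) = num_components E (H - {v}) + 1"
proof -
  define Q where "Q = (H - {v}) // conn_rel E (H - {v})"
  have sym: "\<And>x y. E x y \<Longrightarrow> E y x" using simple_graph_sym[OF sg] by blast
  have "finite H" using simple_graph_finite[OF sg] HV finite_subset by blast
  then have fin_Q: "finite Q"
    unfolding Q_def using finite_quotient[of "H - {v}"] conn_rel_equiv[of E, OF sym]
    by (auto dest: equiv_type)
  have "conn_rel E H `` {v} \<notin> Q"
    using conn_rel_refl[OF v] conn_rel_equiv[of E, OF sym] unfolding Q_def
    by (auto dest: in_quotient_imp_subset)
  then have "num_components E H = card {C \<in> Q. C \<inter> nbhd E H v = {}} + 1"
    using quotient_delete_vertex[of E, OF sym v] fin_Q
    unfolding num_components_def Q_def by simp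
  moreover have "num_components E (nbhd E H v) = card {C \<in> Q. C \<inter> nbhd E H v \<noteq> {}}"
    using bij_betw_same_card[OF components_meeting_nbhd[OF sg ch HV v]]
    unfolding num_components_def Q_def .
  moreover have "num_components E (H - {v}) = card {C \<in> Q. C \<inter> nbhd E H v = {}}
      + card {C \<in> Q. C \<inter> nbhd E H v \<noteq> {}}"
    unfolding num_components_def Q_def[symmetric]
    using fin_Q by (subst card_Un_disjoint[symmetric]) (auto intro: arg_cong[where f = card])
  ultimately show ?thesis by simp
qed

lemma finite_clique_complex: "finite H \<Longrightarrow> finite (clique_complex H E)"
  by (rule finite_subset[of _ "Pow H"]) (auto simp: clique_complex_def)

lemma clique_card_bounds:
  assumes "finite H" "I \<in> clique_complex H E"
  shows "1 \<le> card I" "card I \<le> card H"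
  using assms by (auto simp: clique_complex_def card_mono finite_subset Suc_le_eq card_gt_0_iff)

lemma clique_complex_delete_vertex:
  assumes sym: "\<And>x y. E x y \<Longrightarrow> E y x" and v: "v \<in> H"
  shows "clique_complex H E =
           clique_complex (H - {v}) E \<union> insert v ` ({{}} \<union> clique_complex (nbhd E H v) E)"
proof (intro equalityI subsetI)
  fix I assume I: "I \<in> clique_complex H E"
  show "I \<in> clique_complex (H - {v}) E \<union> insert v ` ({{}} \<union> clique_complex (nbhd E H v) E)"
  proof (cases "v \<in> I")
    case True
    then have "I = insert v (I - {v})" "I - {v} \<in> {{}} \<union> clique_complex (nbhd E H v) E"
      using I by (auto simp: clique_complex_def nbhd_def)
    then show ?thesis by blast
  qed (use I in \<open>auto simp: clique_complex_def\<close>)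
next
  fix I assume "I \<in> clique_complex (H - {v}) E \<union> insert v ` ({{}} \<union> clique_complex (nbhd E H v) E)"
  then show "I \<in> clique_complex H E"
    using v sym by (auto simp: clique_complex_def nbhd_def)
qed

text \<open>The truncated alternating clique count: for m \<ge> |H| this is the Euler
  characteristic of the clique complex of G[H], which for a chordal graph equals
  the number of components; for smaller m it is a Bonferroni-type truncation.\<close>
definition clique_sum :: "('a \<Rightarrow> 'a \<Rightarrow> bool) \<Rightarrow> nat \<Rightarrow> 'a set \<Rightarrow> real" where
  "clique_sum E m H = (\<Sum>I\<in>{I \<in> clique_complex H E. card I \<le> m}. (-1) ^ (card I - 1))"

lemma clique_sum_zero: "finite H \<Longrightarrow> clique_sum E 0 H = 0"
  unfolding clique_sum_def using clique_card_bounds(1)[of H _ E] by (intro sum.neutral) fastforce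

lemma clique_sum_empty: "clique_sum E m {} = 0"
  by (simp add: clique_sum_def clique_complex_def)

text \<open>Deleting a vertex v: the cliques through v are v plus a clique of its
  neighbourhood, of size one less, which flips the sign.\<close>
lemma clique_sum_delete_vertex:
  assumes sym: "\<And>x y. E x y \<Longrightarrow> E y x" and irr: "\<And>x. \<not> E x x"
    and v: "v \<in> H" and fin: "finite H"
  shows "clique_sum E (Suc m) H = clique_sum E (Suc m) (H - {v}) + 1 - clique_sum E m (nbhd E H v)"
proof -
  define N where "N = nbhd E H v"
  define Small where "Small = {T \<in> clique_complex N E. card T \<le> m}"
  define sgn where "sgn I = (-1::real) ^ (card I - 1)" for I :: "'a set"
  have v_N: "v \<notin> N" using irr unfolding N_def nbhd_def by auto
  have fin_N: "finite N" using fin unfolding N_def nbhd_def by auto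
  have card_insert_v: "card (insert v T) = Suc (card T)" if "T \<in> {{}} \<union> clique_complex N E" for T
  proof -
    have "T \<subseteq> N" using that by (auto simp: clique_complex_def)
    then have "finite T" "v \<notin> T" using fin_N v_N finite_subset by auto
    then show ?thesis by simp
  qed
  have split: "{I \<in> clique_complex H E. card I \<le> Suc m} =
      {I \<in> clique_complex (H - {v}) E. card I \<le> Suc m} \<union> insert v ` insert {} Small"
    using clique_complex_delete_vertex[of E, OF sym v] card_insert_v
    unfolding Small_def N_def by auto
  have disjoint: "clique_complex (H - {v}) E \<inter> insert v ` insert {} Small = {}"
    by (auto simp: clique_complex_def)
  have fin_Small: "finite Small" using finite_clique_complex[OF fin_N] unfolding Small_def by simp
  have inj: "inj_on (insert v) (insert {} Small)"
    using v_N by (intro inj_onI) (auto simp: Small_def clique_complex_def insert_ident)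
  have "{} \<notin> Small" by (simp add: Small_def clique_complex_def)
  then have "sum sgn (insert v ` insert {} Small) = sgn {v} + (\<Sum>T\<in>Small. sgn (insert v T))"
    using sum.reindex[OF inj] fin_Small by simp
  also have "sgn {v} = 1" by (simp add: sgn_def)
  also have "(\<Sum>T\<in>Small. sgn (insert v T)) = - clique_sum E m N"
  proof -
    have "sgn (insert v T) = - sgn T" if "T \<in> Small" for T
    proof -
      have "1 \<le> card T" using clique_card_bounds(1)[OF fin_N, of T E] that by (simp add: Small_def)
      then show ?thesis
        using card_insert_v[of T] that by (cases "card T") (auto simp: sgn_def Small_def)
    qed
    then show ?thesis
      by (simp add: sum_negf clique_sum_def sgn_def Small_def)
  qed
  finally have "sum sgn (insert v ` insert {} Small) = 1 - clique_sum E m N" by simp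
  moreover have "clique_sum E (Suc m) H
      = clique_sum E (Suc m) (H - {v}) + sum sgn (insert v ` insert {} Small)"
    unfolding clique_sum_def split sgn_def
    by (rule sum.union_disjoint) (use disjoint fin fin_Small finite_clique_complex[of "H - {v}" E] in auto)
  ultimately show ?thesis unfolding N_def by simp
qed

text \<open>Induction on |H|, deleting a vertex and combining the recursions
  for the clique count and for the number of components.\<close>
lemma clique_sum_bonferroni:
  assumes sg: "simple_graph V E" and ch: "chordal V E" and HV: "H \<subseteq> V"
  shows "(even m \<longrightarrow> clique_sum E m H \<le> real (num_components E H)) \<and>
         (odd m \<longrightarrow> real (num_components E H) \<le> clique_sum E m H)"
  using HV
proof (induction "card H" arbitrary: H m rule: less_induct)
  case less
  have fin: "finite H" using less.prems simple_graph_finite[OF sg] finite_subset by auto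
  show ?case
  proof (cases "H = {}")
    case True
    then show ?thesis by (simp add: clique_sum_empty num_components_def)
  next
    case False
    then obtain v where v: "v \<in> H" by auto
    show ?thesis
    proof (cases m)
      case 0
      then show ?thesis using clique_sum_zero[OF fin] by simp
    next
      case (Suc k)
      define N where "N = nbhd E H v"
      have N_sub: "N \<subseteq> H - {v}"
        using simple_graph_irrefl[OF sg] unfolding N_def nbhd_def by auto
      have smaller: "card (H - {v}) < card H" using fin v by (rule card_Diff1_less)
      then have "card N < card H" using card_mono[OF _ N_sub] fin by simp
      then have IH_N: "(even k \<longrightarrow> clique_sum E k N \<le> real (num_components E N)) \<and>
                       (odd k \<longrightarrow> real (num_components E N) \<le> clique_sum E k N)"
        using less.hyps less.prems N_sub by blast
      have IH_del: "(even m \<longrightarrow> clique_sum E m (H - {v}) \<le> real (num_components E (H - {v}))) \<and>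
                    (odd m \<longrightarrow> real (num_components E (H - {v})) \<le> clique_sum E m (H - {v}))"
        using less.hyps[OF smaller] less.prems by blast
      have "clique_sum E m H = clique_sum E m (H - {v}) + 1 - clique_sum E k N"
        using clique_sum_delete_vertex[of E v H k] simple_graph_sym[OF sg]
          simple_graph_irrefl[OF sg] v fin Suc
        unfolding N_def by blast
      moreover have "real (num_components E H) + real (num_components E N)
          = real (num_components E (H - {v})) + 1"
        using num_components_delete_vertex[OF sg ch less.prems v] unfolding N_def
        by (metis of_nat_1 of_nat_add)
      ultimately show ?thesis using IH_N IH_del Suc by auto
    qed
  qed
qed

lemma clique_sum_exact:
  assumes sg: "simple_graph V E" and ch: "chordal V E" and HV: "H \<subseteq> V" and m: "card H \<le> m"
  shows "clique_sum E m H = real (num_components E H)"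
proof -
  have fin: "finite H" using simple_graph_finite[OF sg] HV finite_subset by auto
  have "{I \<in> clique_complex H E. card I \<le> m} = {I \<in> clique_complex H E. card I \<le> Suc m}"
    using clique_card_bounds(2)[OF fin] m by fastforce
  then have "clique_sum E m H = clique_sum E (Suc m) H" by (simp add: clique_sum_def)
  then show ?thesis
    using clique_sum_bonferroni[OF sg ch HV, of m] clique_sum_bonferroni[OF sg ch HV, of "Suc m"]
    by auto
qed

lemma clique_complex_all_sizes:
  "finite V \<Longrightarrow> card V \<le> m \<Longrightarrow> {I \<in> clique_complex V E. card I \<le> m} = clique_complex V E"
  using clique_card_bounds(2)[of V _ E] by fastforce

definition occurring :: "'a set \<Rightarrow> ('a \<Rightarrow> 'b set) \<Rightarrow> 'b \<Rightarrow> 'a set" where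
  "occurring V A w = {v \<in> V. w \<in> A v}"

lemma atom_occurring: "w \<in> space M \<Longrightarrow> w \<in> atom M V A (occurring V A w)"
  by (auto simp: atom_def occurring_def)

lemma occurring_empty_iff: "occurring V A w = {} \<longleftrightarrow> w \<notin> (\<Union>v\<in>V. A v)"
  by (auto simp: occurring_def)

lemma clique_sum_indicators:
  assumes "finite V"
  shows "(\<Sum>I\<in>{I \<in> clique_complex V E. card I \<le> m}. (-1) ^ (card I - 1) * indicator (\<Inter>i\<in>I. A i) w)
       = clique_sum E m (occurring V A w)"
proof -
  let ?F = "{I \<in> clique_complex V E. card I \<le> m}"
  let ?sgn = "\<lambda>I::'a set. (-1::real) ^ (card I - 1)"
  have indicator: "indicator (\<Inter>i\<in>I. A i) w = (if I \<subseteq> occurring V A w then 1 else (0::real))"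
    if "I \<in> ?F" for I
    using that by (auto simp: indicator_def occurring_def clique_complex_def)
  have "(\<Sum>I\<in>?F. ?sgn I * indicator (\<Inter>i\<in>I. A i) w) = (\<Sum>I\<in>?F. if I \<subseteq> occurring V A w then ?sgn I else 0)"
    by (rule sum.cong) (simp_all add: indicator)
  also have "\<dots> = (\<Sum>I\<in>{I \<in> ?F. I \<subseteq> occurring V A w}. ?sgn I)"
    using finite_clique_complex[OF assms, of E] by (intro sum.inter_filter[symmetric]) simp
  also have "{I \<in> ?F. I \<subseteq> occurring V A w} = {I \<in> clique_complex (occurring V A w) E. card I \<le> m}"
    by (auto simp: clique_complex_def occurring_def)
  finally show ?thesis by (simp add: clique_sum_def)
qed

lemma clique_sum_has_integral:
  assumes "prob_space M" "finite V" "\<And>v. v \<in> V \<Longrightarrow> A v \<in> sets M"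
  shows "has_bochner_integral M (\<lambda>w. clique_sum E m (occurring V A w))
           (\<Sum>I\<in>{I \<in> clique_complex V E. card I \<le> m}. (-1) ^ (card I - 1) * measure M (\<Inter>i\<in>I. A i))"
proof -
  interpret prob_space M by fact
  have "(\<Inter>i\<in>I. A i) \<in> sets M" if "I \<in> clique_complex V E" for I
    using that assms(3) finite_subset[OF _ assms(2)]
    by (intro sets.finite_INT) (auto simp: clique_complex_def)
  then have "has_bochner_integral M
      (\<lambda>w. \<Sum>I\<in>{I \<in> clique_complex V E. card I \<le> m}. (-1) ^ (card I - 1) * indicator (\<Inter>i\<in>I. A i) w)
      (\<Sum>I\<in>{I \<in> clique_complex V E. card I \<le> m}. (-1) ^ (card I - 1) * measure M (\<Inter>i\<in>I. A i))"
    by (intro has_bochner_integral_sum has_bochner_integral_mult_right has_bochner_integral_real_indicator)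
      (auto simp: less_top[symmetric])
  then show ?thesis unfolding clique_sum_indicators[OF assms(2)] .
qed

lemma num_components_occurring_le:
  assumes "finite V" "w \<in> space M"
  shows "real (num_components E (occurring V A w)) \<le> real (alpha' M V E A) * indicator (\<Union>v\<in>V. A v) w"
proof (cases "w \<in> (\<Union>v\<in>V. A v)")
  case True
  have "finite {num_components E J |J. J \<subseteq> V \<and> J \<noteq> {} \<and> atom M V A J \<noteq> {}}"
    using assms(1) by (auto intro: finite_subset[of _ "num_components E ` Pow V"])
  moreover have "occurring V A w \<subseteq> V" "occurring V A w \<noteq> {}" "atom M V A (occurring V A w) \<noteq> {}"
    using True atom_occurring[OF assms(2)] occurring_empty_iff[of V A w]
    by (auto simp: occurring_def)
  ultimately have "num_components E (occurring V A w) \<le> alpha' M V E A"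
    unfolding alpha'_def by (intro Max_ge) auto
  then show ?thesis using True by simp
next
  case False
  then show ?thesis
    using occurring_empty_iff[of V A w] by (simp add: num_components_def)
qed

text \<open>Integrating the even-truncation Bonferroni inequality against the bound by
  \<alpha>' gives the lower bound for the probability of the union.\<close>
lemma union_lower_bound:
  assumes M: "prob_space M" and sg: "simple_graph V E" and ch: "chordal V E"
    and A: "\<And>v. v \<in> V \<Longrightarrow> A v \<in> sets M" and m: "even m"
  shows "1 / real (alpha' M V E A) *
           (\<Sum>I\<in>{I \<in> clique_complex V E. card I \<le> m}. (-1) ^ (card I - 1) * measure M (\<Inter>i\<in>I. A i))
         \<le> measure M (\<Union>v\<in>V. A v)"
proof -
  interpret prob_space M by (rule M)
  define U where "U = (\<Union>v\<in>V. A v)"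
  define a where "a = real (alpha' M V E A)"
  have fin: "finite V" by (rule simple_graph_finite[OF sg])
  have U: "U \<in> sets M" unfolding U_def using A fin by auto
  note clique_integral = clique_sum_has_integral[OF M fin A, where E = E and m = m]
  have "(\<Sum>I\<in>{I \<in> clique_complex V E. card I \<le> m}. (-1) ^ (card I - 1) * measure M (\<Inter>i\<in>I. A i))
      = (\<integral>w. clique_sum E m (occurring V A w) \<partial>M)"
    using clique_integral by (simp add: has_bochner_integral_iff)
  also have "\<dots> \<le> (\<integral>w. a * indicator U w \<partial>M)"
  proof (rule integral_mono)
    show "integrable M (\<lambda>w. clique_sum E m (occurring V A w))"
      using clique_integral by (simp add: has_bochner_integral_iff)
    show "integrable M (\<lambda>w. a * indicator U w)"
      using U by (intro integrable_mult_right integrable_real_indicator) (auto simp: less_top[symmetric])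
    fix w assume "w \<in> space M"
    have "occurring V A w \<subseteq> V" by (auto simp: occurring_def)
    then have "clique_sum E m (occurring V A w) \<le> real (num_components E (occurring V A w))"
      using clique_sum_bonferroni[OF sg ch] m by blast
    also have "\<dots> \<le> a * indicator U w"
      unfolding a_def U_def using num_components_occurring_le[OF fin \<open>w \<in> space M\<close>] .
    finally show "clique_sum E m (occurring V A w) \<le> a * indicator U w" .
  qed
  also have "\<dots> = a * measure M U" using U by simp
  finally have "(\<Sum>I\<in>{I \<in> clique_complex V E. card I \<le> m}. (-1) ^ (card I - 1) * measure M (\<Inter>i\<in>I. A i))
      \<le> a * measure M U" .
  then show ?thesis
    unfolding a_def U_def by (cases "alpha' M V E A = 0") (auto simp: field_simps)
qed

text \<open>If every non-empty atom has a connected index set, the number of components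
  of the occurring set is the indicator of the union, and the full inclusion-exclusion
  sum over cliques is exact.\<close>
lemma union_exact:
  assumes M: "prob_space M" and sg: "simple_graph V E" and ch: "chordal V E"
    and A: "\<And>v. v \<in> V \<Longrightarrow> A v \<in> sets M"
    and conn: "\<forall>J. J \<subseteq> V \<and> J \<noteq> {} \<and> atom M V A J \<noteq> {} \<longrightarrow> num_components E J = 1"
  shows "measure M (\<Union>v\<in>V. A v) =
           (\<Sum>I\<in>clique_complex V E. (-1) ^ (card I - 1) * measure M (\<Inter>i\<in>I. A i))"
proof -
  interpret prob_space M by (rule M)
  define U where "U = (\<Union>v\<in>V. A v)"
  have fin: "finite V" by (rule simple_graph_finite[OF sg])
  have U: "U \<in> sets M" unfolding U_def using A fin by auto
  have components_indicator: "clique_sum E (card V) (occurring V A w) = indicator U w"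
    if w: "w \<in> space M" for w
  proof -
    have J: "occurring V A w \<subseteq> V" by (auto simp: occurring_def)
    then have "clique_sum E (card V) (occurring V A w) = real (num_components E (occurring V A w))"
      using clique_sum_exact[OF sg ch J] card_mono[OF fin J] by simp
    also have "\<dots> = indicator U w"
      using conn J atom_occurring[OF w, of V A] occurring_empty_iff[of V A w]
      unfolding U_def by (cases "w \<in> (\<Union>v\<in>V. A v)") (auto simp: num_components_def)
    finally show ?thesis .
  qed
  have "has_bochner_integral M (\<lambda>w. clique_sum E (card V) (occurring V A w))
          (\<Sum>I\<in>clique_complex V E. (-1) ^ (card I - 1) * measure M (\<Inter>i\<in>I. A i))"
    using clique_sum_has_integral[OF M fin A, where E = E and m = "card V"]
    by (simp add: clique_complex_all_sizes[OF fin])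
  then have "has_bochner_integral M (indicator U)
          (\<Sum>I\<in>clique_complex V E. (-1) ^ (card I - 1) * measure M (\<Inter>i\<in>I. A i))"
    by (rule has_bochner_integral_cong[THEN iffD1, rotated -1]) (simp_all add: components_indicator)
  then show ?thesis
    using has_bochner_integral_real_indicator[OF U] has_bochner_integral_eq unfolding U_def
    by (auto simp: less_top[symmetric])
qed

theorem mainTheorem4:
  fixes M :: "'b measure" and V :: "'a set" and E :: "'a \<Rightarrow> 'a \<Rightarrow> bool"
    and A :: "'a \<Rightarrow> 'b set"
  assumes "prob_space M"
    and "simple_graph V E" and "chordal V E" and "V \<noteq> {}"
    and "\<And>v. v \<in> V \<Longrightarrow> A v \<in> sets M"
    and "(\<Union>v\<in>V. A v) \<noteq> {}"
  shows "(\<forall>r::nat. r \<ge> 1 \<longrightarrow>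
           measure M (\<Union>v\<in>V. A v) \<ge> 1 / real (alpha' M V E A) *
             (\<Sum>I\<in>{I \<in> clique_complex V E. card I \<le> 2 * r}.
                (-1) ^ (card I - 1) * measure M (\<Inter>i\<in>I. A i)))
       \<and> measure M (\<Union>v\<in>V. A v) \<ge> 1 / real (alpha' M V E A) *
             (\<Sum>I\<in>clique_complex V E. (-1) ^ (card I - 1) * measure M (\<Inter>i\<in>I. A i))
       \<and> ((\<forall>J. J \<subseteq> V \<and> J \<noteq> {} \<and> atom M V A J \<noteq> {} \<longrightarrow> num_components E J = 1) \<longrightarrow>
           measure M (\<Union>v\<in>V. A v) =
             (\<Sum>I\<in>clique_complex V E. (-1) ^ (card I - 1) * measure M (\<Inter>i\<in>I. A i)))"
proof (intro conjI allI impI)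
  note lower = union_lower_bound[OF assms(1-3) assms(5)]
  show "measure M (\<Union>v\<in>V. A v) \<ge> 1 / real (alpha' M V E A) *
          (\<Sum>I\<in>{I \<in> clique_complex V E. card I \<le> 2 * r}. (-1) ^ (card I - 1) * measure M (\<Inter>i\<in>I. A i))"
    for r :: nat
    using lower[where m = "2 * r"] by simp
  have "finite V" by (rule simple_graph_finite[OF assms(2)])
  then show "measure M (\<Union>v\<in>V. A v) \<ge> 1 / real (alpha' M V E A) *
          (\<Sum>I\<in>clique_complex V E. (-1) ^ (card I - 1) * measure M (\<Inter>i\<in>I. A i))"
    using lower[where m = "2 * card V"] clique_complex_all_sizes[of V "2 * card V" E] by simp
  show "measure M (\<Union>v\<in>V. A v) =
          (\<Sum>I\<in>clique_complex V E. (-1) ^ (card I - 1) * measure M (\<Inter>i\<in>I. A i))"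
    if "\<forall>J. J \<subseteq> V \<and> J \<noteq> {} \<and> atom M V A J \<noteq> {} \<longrightarrow> num_components E J = 1"
    using union_exact[OF assms(1-3) assms(5) that] .
qed

end
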